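(* Let $r\ge 1$, $n$ be integers and let $\sigma,\sigma':\mathbb{Z}_n\to\{0,1\}$ be configurations with $\mathrm{maj}_r(\sigma)=\sigma'$. If $i\in\mathbb{Z}_n$ satisfies $\sigma'(i)\ne\sigma'(i+1)$, then $\#_0(\sigma[[i-r+1,i+r]])=\#_1(\sigma[[i-r+1,i+r]])$, where $[i-r+1,i+r]=\Gamma_r(i)\cap\Gamma_r(i+1)$.
   Context: Cells are elements of $\mathbb{Z}_n$, arithmetic mod $n$; $[a,b]$ denotes the cyclic interval $a,a+1,\dots,b$ and $\Gamma_r(i)=[i-r,i+r]$. For a configuration $\sigma$ and $\beta\in\{0,1\}$, $\#_\beta(\sigma[I])$ counts cells $\ell\in I$ with $\sigma(\ell)=\beta$. The majority rule with radius $r$: $\mathrm{maj}_r(\sigma)(i)=0$ if $\#_0(\sigma[\Gamma_r(i)])>\#_1(\sigma[\Gamma_r(i)])$ and $=1$ otherwise. *)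

theory Defs
  imports Main
begin

text \<open>Cells of Z_n are represented by the integers 0..n-1; a configuration is a
function int \<Rightarrow> nat whose values on the cells lie in {0,1}.\<close>

definition cells :: "int \<Rightarrow> int set" where
  "cells n = {0..<n}"

definition cyc_interval :: "int \<Rightarrow> int \<Rightarrow> int \<Rightarrow> int set" where
  "cyc_interval n a b = (\<lambda>l. l mod n) ` {a..b}"

definition Gamma :: "int \<Rightarrow> int \<Rightarrow> int \<Rightarrow> int set" where
  "Gamma n r i = cyc_interval n (i - r) (i + r)"

definition cnt :: "nat \<Rightarrow> (int \<Rightarrow> nat) \<Rightarrow> int set \<Rightarrow> nat" where
  "cnt \<beta> \<sigma> I = card {l \<in> I. \<sigma> l = \<beta>}"

definition is_config :: "int \<Rightarrow> (int \<Rightarrow> nat) \<Rightarrow> bool" where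
  "is_config n \<sigma> \<longleftrightarrow> (\<forall>i \<in> cells n. \<sigma> i \<in> {0, 1})"

definition maj :: "int \<Rightarrow> int \<Rightarrow> (int \<Rightarrow> nat) \<Rightarrow> int \<Rightarrow> nat" where
  "maj n r \<sigma> i = (if cnt 0 \<sigma> (Gamma n r i) > cnt 1 \<sigma> (Gamma n r i) then 0 else 1)"

end

theory Submission
  imports Defs
begin

text \<open>If the windows of i and i + 1 wrap around the whole ring they coincide, so the majority
  cannot change. Otherwise both windows consist of the common part
  I = [i - r + 1, i + r] of 2r cells plus one extra cell. Since |I| is even, an unbalanced I
  has a majority margin of at least 2, which a single extra cell cannot overturn; so the
  majority values at i and i + 1 would agree.\<close>

lemma cyc_interval_eq_cells:
  assumes "n \<ge> 1" "b - a + 1 \<ge> n"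
  shows "cyc_interval n a b = cells n"
proof
  show "cyc_interval n a b \<subseteq> cells n"
    using assms by (auto simp: cyc_interval_def cells_def)
  show "cells n \<subseteq> cyc_interval n a b"
  proof
    fix k assume k: "k \<in> cells n"
    define l where "l = a + (k - a) mod n"
    have "0 \<le> (k - a) mod n" "(k - a) mod n < n"
      using assms(1) by simp_all
    then have "l \<in> {a..b}"
      using assms(2) unfolding l_def by simp
    moreover have "l mod n = k"
      using k unfolding l_def cells_def by (simp add: mod_add_right_eq)
    ultimately show "k \<in> cyc_interval n a b"
      unfolding cyc_interval_def by force
  qed
qed

lemma inj_on_mod_interval:
  fixes a b n :: int
  assumes "b - a < n"
  shows "inj_on (\<lambda>l. l mod n) {a..b}"
proof
  fix x y assume xy: "x \<in> {a..b}" "y \<in> {a..b}" "x mod n = y mod n"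
  then obtain k where k: "x - y = n * k"
    by (metis dvd_def mod_eq_dvd_iff)
  have "n > 0"
    using xy(1) assms by simp
  moreover have "\<bar>n * k\<bar> < n"
    using xy assms k by auto
  ultimately have "\<bar>k\<bar> < 1"
    by (simp add: abs_mult)
  then have "k = 0"
    by simp
  then show "x = y"
    using k by simp
qed

lemma card_cyc_interval:
  assumes "b - a < n"
  shows "card (cyc_interval n a b) = nat (b - a + 1)"
  unfolding cyc_interval_def using inj_on_mod_interval[OF assms] by (simp add: card_image)

lemma cyc_interval_insert_left:
  assumes "a \<le> b" "b - a < n"
  shows "cyc_interval n a b = insert (a mod n) (cyc_interval n (a + 1) b)"
    and "a mod n \<notin> cyc_interval n (a + 1) b"
proof -
  have "{a..b} = insert a {a + 1..b}"
    using assms(1) by auto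
  then show "cyc_interval n a b = insert (a mod n) (cyc_interval n (a + 1) b)"
    unfolding cyc_interval_def by simp
  show "a mod n \<notin> cyc_interval n (a + 1) b"
    using inj_on_image_mem_iff[OF inj_on_mod_interval[OF assms(2)], of a "{a + 1..b}"]
      assms(1) unfolding cyc_interval_def by auto
qed

lemma cyc_interval_insert_right:
  assumes "a \<le> b" "b - a < n"
  shows "cyc_interval n a b = insert (b mod n) (cyc_interval n a (b - 1))"
    and "b mod n \<notin> cyc_interval n a (b - 1)"
proof -
  have "{a..b} = insert b {a..b - 1}"
    using assms(1) by auto
  then show "cyc_interval n a b = insert (b mod n) (cyc_interval n a (b - 1))"
    unfolding cyc_interval_def by simp
  show "b mod n \<notin> cyc_interval n a (b - 1)"
    using inj_on_image_mem_iff[OF inj_on_mod_interval[OF assms(2)], of b "{a..b - 1}"]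
      assms(1) unfolding cyc_interval_def by auto
qed

lemma cyc_interval_shift:
  "cyc_interval n (a + d) (b + d) = (\<lambda>l. (l + d) mod n) ` {a..b}"
proof -
  have "{a + d..b + d} = (\<lambda>l. l + d) ` {a..b}"
    by (auto simp: image_iff intro!: bexI[where x = "_ - d"])
  then show ?thesis
    unfolding cyc_interval_def by (simp only: image_image)
qed

lemma Gamma_mod: "Gamma n r (i mod n) = Gamma n r i"
proof -
  have "\<And>j. Gamma n r j = (\<lambda>l. (l + j) mod n) ` {-r..r}"
    unfolding Gamma_def using cyc_interval_shift[of n "-r" _ r] by (simp add: add.commute)
  then show ?thesis
    by (simp add: mod_add_right_eq)
qed

lemma Gamma_eq_cells:
  assumes "n \<ge> 1" "n \<le> 2 * r + 1"
  shows "Gamma n r i = cells n"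
  unfolding Gamma_def using assms by (simp add: cyc_interval_eq_cells)

lemma Gamma_eq_insert_left:
  assumes "r \<ge> 0" "2 * r < n"
  shows "Gamma n r i = insert ((i - r) mod n) (cyc_interval n (i - r + 1) (i + r))"
    and "(i - r) mod n \<notin> cyc_interval n (i - r + 1) (i + r)"
  using assms cyc_interval_insert_left[of "i - r" "i + r" n] by (simp_all add: Gamma_def)

lemma Gamma_Suc_eq_insert_right:
  assumes "r \<ge> 0" "2 * r < n"
  shows "Gamma n r (i + 1) = insert ((i + r + 1) mod n) (cyc_interval n (i - r + 1) (i + r))"
    and "(i + r + 1) mod n \<notin> cyc_interval n (i - r + 1) (i + r)"
  using assms cyc_interval_insert_right[of "i - r + 1" "i + r + 1" n]
  by (simp_all add: Gamma_def algebra_simps)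

lemma cnt_insert:
  assumes "finite I" "x \<notin> I"
  shows "cnt \<beta> \<sigma> (insert x I) = cnt \<beta> \<sigma> I + (if \<sigma> x = \<beta> then 1 else 0)"
proof -
  have "{l \<in> insert x I. \<sigma> l = \<beta>}
      = (if \<sigma> x = \<beta> then insert x {l \<in> I. \<sigma> l = \<beta>} else {l \<in> I. \<sigma> l = \<beta>})"
    by auto
  then show ?thesis
    using assms unfolding cnt_def by simp
qed

lemma cnt_0_add_cnt_1:
  assumes "finite I" "\<forall>l \<in> I. \<sigma> l \<in> {0, 1}"
  shows "cnt 0 \<sigma> I + cnt 1 \<sigma> I = card I"
proof -
  have "I = {l \<in> I. \<sigma> l = 0} \<union> {l \<in> I. \<sigma> l = 1}"
    using assms(2) by auto
  also have "card \<dots> = card {l \<in> I. \<sigma> l = 0} + card {l \<in> I. \<sigma> l = 1}"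
    using assms(1) by (intro card_Un_disjoint) auto
  finally show ?thesis
    unfolding cnt_def ..
qed

lemma less_add_bits_iff:
  fixes a b x y :: nat
  assumes "even (a + b)" "a \<noteq> b" "x \<le> 1" "y \<le> 1"
  shows "b + y < a + x \<longleftrightarrow> b < a"
proof -
  have "a \<noteq> b + 1" "b \<noteq> a + 1"
    using assms(1) by auto
  then show ?thesis
    using assms(2-4) by linarith
qed

lemma majority_insert_unbalanced:
  assumes "finite I" "p \<notin> I" "\<forall>l \<in> I. \<sigma> l \<in> {0, 1}" "even (card I)"
    and "cnt 0 \<sigma> I \<noteq> cnt 1 \<sigma> I"
  shows "cnt 1 \<sigma> (insert p I) < cnt 0 \<sigma> (insert p I) \<longleftrightarrow> cnt 1 \<sigma> I < cnt 0 \<sigma> I"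
proof -
  have "even (cnt 0 \<sigma> I + cnt 1 \<sigma> I)"
    using assms(4) by (simp only: cnt_0_add_cnt_1[OF assms(1,3)])
  from less_add_bits_iff[OF this assms(5)] show ?thesis
    unfolding cnt_insert[OF assms(1,2)] by simp
qed

lemma maj_Suc_eq_if_overlap_unbalanced:
  fixes n r i :: int and I :: "int set"
  defines "I \<equiv> cyc_interval n (i - r + 1) (i + r)"
  assumes "r \<ge> 0" "2 * r < n" "\<forall>l \<in> I. \<sigma> l \<in> {0, 1}"
    and "cnt 0 \<sigma> I \<noteq> cnt 1 \<sigma> I"
  shows "maj n r \<sigma> (i + 1) = maj n r \<sigma> i"
proof -
  have "finite I"
    by (simp add: I_def cyc_interval_def)
  moreover have "even (card I)"
    using assms(2,3) by (simp add: I_def card_cyc_interval nat_mult_distrib)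
  ultimately have stable: "\<And>p. p \<notin> I \<Longrightarrow>
      cnt 1 \<sigma> (insert p I) < cnt 0 \<sigma> (insert p I) \<longleftrightarrow> cnt 1 \<sigma> I < cnt 0 \<sigma> I"
    using majority_insert_unbalanced assms(4,5) by blast
  note window_i = Gamma_eq_insert_left[OF assms(2,3), of i, folded I_def]
    and window_Suc_i = Gamma_Suc_eq_insert_right[OF assms(2,3), of i, folded I_def]
  show ?thesis
    unfolding maj_def window_i(1) window_Suc_i(1)
      stable[OF window_i(2)] stable[OF window_Suc_i(2)] ..
qed

theorem claim2:
  fixes n r :: int and \<sigma> \<sigma>' :: "int \<Rightarrow> nat" and i :: int
  assumes "r \<ge> 1" and "n \<ge> 1"
    and "is_config n \<sigma>" and "is_config n \<sigma>'"
    and "\<forall>j \<in> cells n. \<sigma>' j = maj n r \<sigma> j"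
    and "i \<in> cells n"
    and "\<sigma>' i \<noteq> \<sigma>' ((i + 1) mod n)"
  shows "cnt 0 \<sigma> (cyc_interval n (i - r + 1) (i + r))
       = cnt 1 \<sigma> (cyc_interval n (i - r + 1) (i + r))"
proof (rule ccontr)
  define I where "I = cyc_interval n (i - r + 1) (i + r)"
  assume unbalanced: "cnt 0 \<sigma> I \<noteq> cnt 1 \<sigma> I"
  have "(i + 1) mod n \<in> cells n"
    using assms(2) by (simp add: cells_def)
  then have "maj n r \<sigma> (i + 1) \<noteq> maj n r \<sigma> i"
    using assms(5-7) Gamma_mod[of n r "i + 1"] by (simp add: maj_def)
  moreover have "maj n r \<sigma> (i + 1) = maj n r \<sigma> i"
  proof (cases "2 * r < n")
    case True
    have "\<forall>l \<in> I. \<sigma> l \<in> {0, 1}"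
      using assms(2,3) by (auto simp: I_def cyc_interval_def is_config_def cells_def)
    with True show ?thesis
      using assms(1) unbalanced unfolding I_def by (simp add: maj_Suc_eq_if_overlap_unbalanced)
  next
    case False
    then show ?thesis
      using assms(2) by (simp add: maj_def Gamma_eq_cells)
  qed
  ultimately show False
    by simp
qed

end
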